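(* Let $\rho$ be a qubit state and define the concatenation protocol as follows. Set $\sigma_{(0)}=\rho$. Given $\sigma_{(m)}$ with $p^{(m)}_{00}=\langle0|\sigma_{(m)}|0\rangle$, let $U_m$ be the two-qubit unitary acting as the identity on $|00\rangle,|11\rangle$ and as the rotation $|01\rangle\mapsto\cos\theta_m|01\rangle+\sin\theta_m|10\rangle$, $|10\rangle\mapsto-\sin\theta_m|01\rangle+\cos\theta_m|10\rangle$ with $\cos\theta_m=1/\sqrt{1+(2p^{(m)}_{00}-1)^2}$, $\sin\theta_m=(2p^{(m)}_{00}-1)/\sqrt{1+(2p^{(m)}_{00}-1)^2}$, and set $\sigma_{(m+1)}=\mathrm{tr}_B\big[U_m(\sigma_{(m)}\otimes\sigma_{(m)})U_m^\dagger\big]$ (so $\sigma_{(m)}$ consumes $2^m$ copies of $\rho$). Then for every $m$, $$M^{(1)}(\sigma_{(m)})\le\sqrt{2\,\mathrm{tr}(\rho^2)-1}.$$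
   Context: Qubit basis $\{|0\rangle,|1\rangle\}$ is the eigenbasis of $L=|1\rangle\langle1|$. The coherence measure is $M^{(1)}(\sigma):=\|\,|1\rangle\langle1|\sigma|0\rangle\langle0|\,\|_1=|\langle0|\sigma|1\rangle|$. The unitaries $U_m$ commute with $L\otimes\mathbb{I}+\mathbb{I}\otimes L$ and are the optimal two-copy coherence-concentrating unitaries for $\sigma_{(m)}$. *)

theory Defs
  imports Complex_Main
begin

text \<open>Computational basis of a qubit indexed by bool: False = |0>, True = |1>.
  One-qubit operators are matrices bool => bool => complex (row, column);
  two-qubit operators are indexed by pairs (first factor A, second factor B).\<close>

type_synonym qop = "bool \<Rightarrow> bool \<Rightarrow> complex"
type_synonym qop2 = "bool \<times> bool \<Rightarrow> bool \<times> bool \<Rightarrow> complex"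

definition trace1 :: "qop \<Rightarrow> complex" where
  "trace1 A = (\<Sum>i\<in>UNIV. A i i)"

definition hermitian1 :: "qop \<Rightarrow> bool" where
  "hermitian1 A \<longleftrightarrow> (\<forall>i j. cnj (A j i) = A i j)"

definition psd1 :: "qop \<Rightarrow> bool" where
  "psd1 A \<longleftrightarrow> hermitian1 A \<and>
     (\<forall>v :: bool \<Rightarrow> complex. 0 \<le> Re (\<Sum>i\<in>UNIV. \<Sum>j\<in>UNIV. cnj (v i) * A i j * v j))"

definition qubit_state :: "qop \<Rightarrow> bool" where
  "qubit_state \<rho> \<longleftrightarrow> psd1 \<rho> \<and> trace1 \<rho> = 1"

definition mult1 :: "qop \<Rightarrow> qop \<Rightarrow> qop" where
  "mult1 A B = (\<lambda>i j. \<Sum>k\<in>UNIV. A i k * B k j)"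

definition mult2 :: "qop2 \<Rightarrow> qop2 \<Rightarrow> qop2" where
  "mult2 A B = (\<lambda>i j. \<Sum>k\<in>UNIV. A i k * B k j)"

definition adj2 :: "qop2 \<Rightarrow> qop2" where
  "adj2 A = (\<lambda>i j. cnj (A j i))"

definition tensor :: "qop \<Rightarrow> qop \<Rightarrow> qop2" where
  "tensor A B = (\<lambda>(i, k) (j, l). A i j * B k l)"

definition ptrace_B :: "qop2 \<Rightarrow> qop" where
  "ptrace_B X = (\<lambda>i j. \<Sum>k\<in>UNIV. X (i, k) (j, k))"

definition rotU :: "real \<Rightarrow> real \<Rightarrow> qop2" where
  "rotU c s = (\<lambda>r col.
     if r = (False, False) \<and> col = (False, False) then 1
     else if r = (True, True) \<and> col = (True, True) then 1
     else if r = (False, True) \<and> col = (False, True) then complex_of_real c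
     else if r = (True, False) \<and> col = (False, True) then complex_of_real s
     else if r = (False, True) \<and> col = (True, False) then complex_of_real (- s)
     else if r = (True, False) \<and> col = (True, False) then complex_of_real c
     else 0)"

definition p00 :: "qop \<Rightarrow> real" where
  "p00 \<sigma> = Re (\<sigma> False False)"

definition cos_theta :: "qop \<Rightarrow> real" where
  "cos_theta \<sigma> = 1 / sqrt (1 + (2 * p00 \<sigma> - 1)\<^sup>2)"

definition sin_theta :: "qop \<Rightarrow> real" where
  "sin_theta \<sigma> = (2 * p00 \<sigma> - 1) / sqrt (1 + (2 * p00 \<sigma> - 1)\<^sup>2)"

definition U_step :: "qop \<Rightarrow> qop2" where
  "U_step \<sigma> = rotU (cos_theta \<sigma>) (sin_theta \<sigma>)"

definition concat_step :: "qop \<Rightarrow> qop" where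
  "concat_step \<sigma> = ptrace_B (mult2 (mult2 (U_step \<sigma>) (tensor \<sigma> \<sigma>)) (adj2 (U_step \<sigma>)))"

fun sigma_seq :: "qop \<Rightarrow> nat \<Rightarrow> qop" where
  "sigma_seq \<rho> 0 = \<rho>"
| "sigma_seq \<rho> (Suc m) = concat_step (sigma_seq \<rho> m)"

definition M1 :: "qop \<Rightarrow> real" where
  "M1 \<sigma> = cmod (\<sigma> False True)"

text \<open>Purity tr(rho^2) (real for Hermitian rho; we take the real part).\<close>
definition purity :: "qop \<Rightarrow> real" where
  "purity \<rho> = Re (trace1 (mult1 \<rho> \<rho>))"

end

theory Submission
  imports Defs
begin

text \<open>Write a Hermitian unit-trace qubit operator as [[p, x], [cnj x, 1 - p]] and use the
  Bloch coordinates z = 2p - 1 and w = 4|x|^2; positivity says z^2 + w \<le> 1, and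
  z^2 + w = 2 tr(\<rho>^2) - 1. With the prescribed angle, one concatenation step maps
  (z, w) to (z (1 - w / (1 + z^2)), w (1 + z^2)), and inside the Bloch ball this does not
  increase z^2 + w. So z^2 + w never exceeds its initial value along the protocol,
  and the coherence |x| is at most sqrt (z^2 + w).\<close>

definition qmat :: "real \<Rightarrow> complex \<Rightarrow> qop" where
  "qmat p x = (\<lambda>i j. case (i, j) of
      (False, False) \<Rightarrow> of_real p | (False, True) \<Rightarrow> x
    | (True, False) \<Rightarrow> cnj x | (True, True) \<Rightarrow> of_real (1 - p))"

lemma qmat_simps [simp]:
  "qmat p x False False = of_real p" "qmat p x False True = x"
  "qmat p x True False = cnj x" "qmat p x True True = of_real (1 - p)"
  by (simp_all add: qmat_def)

lemma qmat_eqI: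
  assumes "\<sigma> False False = of_real p" "\<sigma> False True = x"
    "\<sigma> True False = cnj x" "\<sigma> True True = of_real (1 - p)"
  shows "\<sigma> = qmat p x"
  using assms by (intro ext) (auto simp: qmat_def split: bool.split)

lemma hermitian1_unit_trace_qmatE:
  assumes "hermitian1 \<sigma>" "trace1 \<sigma> = 1"
  obtains p x where "\<sigma> = qmat p x"
proof
  show "\<sigma> = qmat (p00 \<sigma>) (\<sigma> False True)"
  proof (rule qmat_eqI)
    have herm: "cnj (\<sigma> j i) = \<sigma> i j" for i j
      using assms(1) unfolding hermitian1_def by blast
    show diag: "\<sigma> False False = of_real (p00 \<sigma>)"
      using herm[of False False] by (simp add: p00_def complex_eq_iff)
    show "\<sigma> True False = cnj (\<sigma> False True)"
      by (simp flip: herm[of False True])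
    show "\<sigma> True True = of_real (1 - p00 \<sigma>)"
      using assms(2) diag by (simp add: trace1_def UNIV_bool algebra_simps)
  qed simp
qed

lemma psd1_qmat_off_diag_bound:
  assumes "psd1 (qmat p x)"
  shows "(cmod x)\<^sup>2 \<le> p * (1 - p)"
proof -
  define n where "n = (cmod x)\<^sup>2"
  have xx: "x * cnj x = of_real n" "cnj x * x = of_real n"
    unfolding n_def by (simp_all add: complex_norm_square mult.commute del: of_real_power)
  have quad: "Re (\<Sum>i\<in>UNIV. \<Sum>j\<in>UNIV. cnj (v i) * qmat p x i j * v j)
    = Re (cnj (v False) * of_real p * v False + cnj (v False) * x * v True
      + cnj (v True) * cnj x * v False + cnj (v True) * of_real (1 - p) * v True)" for v
    by (simp add: UNIV_bool)
  have form: "0 \<le> Re (cnj (v False) * of_real p * v False + cnj (v False) * x * v True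
      + cnj (v True) * cnj x * v False + cnj (v True) * of_real (1 - p) * v True)" for v
    using assms unfolding psd1_def quad by blast
  show ?thesis
  proof (cases "p > 0")
    case True
    have "0 \<le> p * (p * (1 - p) - n)"
      using form[of "\<lambda>i. if i then of_real p else - x"]
      by (simp add: xx algebra_simps flip: of_real_mult)
    with True show ?thesis by (simp add: n_def zero_le_mult_iff)
  next
    case False
    have "0 \<le> (1 - p) * (p * (1 - p) - n)"
      using form[of "\<lambda>i. if i then - cnj x else of_real (1 - p)"]
      by (simp add: xx algebra_simps flip: of_real_mult)
    with False show ?thesis by (simp add: n_def zero_le_mult_iff)
  qed
qed

text \<open>Squared length of the Bloch vector r, where \<sigma> = (I + r \<cdot> (X, Y, Z))/2 for unit trace:
  r_z = \<sigma>_00 - \<sigma>_11 and r_x - i r_y = 2 \<sigma>_01.\<close>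
definition bloch_norm2 :: "qop \<Rightarrow> real" where
  "bloch_norm2 \<sigma> = (Re (\<sigma> False False - \<sigma> True True))\<^sup>2 + 4 * (cmod (\<sigma> False True))\<^sup>2"

lemma bloch_norm2_qmat: "bloch_norm2 (qmat p x) = (2 * p - 1)\<^sup>2 + 4 * (cmod x)\<^sup>2"
  by (simp add: bloch_norm2_def)

lemma purity_qmat: "purity (qmat p x) = p\<^sup>2 + (1 - p)\<^sup>2 + 2 * (cmod x)\<^sup>2"
  using cmod_power2[of x]
  by (simp add: purity_def trace1_def mult1_def UNIV_bool power2_eq_square)

lemma bloch_norm2_eq_purity:
  assumes "hermitian1 \<rho>" "trace1 \<rho> = 1"
  shows "bloch_norm2 \<rho> = 2 * purity \<rho> - 1"
proof -
  obtain p x where "\<rho> = qmat p x"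
    using assms by (rule hermitian1_unit_trace_qmatE)
  then show ?thesis
    by (simp add: bloch_norm2_qmat purity_qmat power2_eq_square algebra_simps)
qed

lemma qubit_state_bloch_norm2_le_1:
  assumes "qubit_state \<rho>"
  shows "bloch_norm2 \<rho> \<le> 1"
proof -
  have herm: "hermitian1 \<rho>" and psd: "psd1 \<rho>" and tr: "trace1 \<rho> = 1"
    using assms by (auto simp: qubit_state_def psd1_def)
  obtain p x where \<rho>: "\<rho> = qmat p x"
    using herm tr by (rule hermitian1_unit_trace_qmatE)
  have "(cmod x)\<^sup>2 \<le> p * (1 - p)"
    using psd unfolding \<rho> by (rule psd1_qmat_off_diag_bound)
  then show ?thesis
    unfolding \<rho> bloch_norm2_qmat by (simp add: algebra_simps power2_eq_square)
qed

lemma M1_le_sqrt_bloch_norm2: "M1 \<sigma> \<le> sqrt (bloch_norm2 \<sigma>)"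
proof -
  have "(cmod (\<sigma> False True))\<^sup>2 \<le> bloch_norm2 \<sigma>"
    unfolding bloch_norm2_def by (simp add: add_increasing)
  then show ?thesis
    unfolding M1_def by (rule real_le_rsqrt)
qed

lemma UNIV_bool_prod:
  "(UNIV :: (bool \<times> bool) set) = {(False, False), (False, True), (True, False), (True, True)}"
  by auto

lemma ptrace_B_rotU_conj_qmat:
  fixes c s :: real
  assumes "c\<^sup>2 + s\<^sup>2 = 1"
  shows "ptrace_B (mult2 (mult2 (rotU c s) (tensor (qmat p x) (qmat p x))) (adj2 (rotU c s)))
    = qmat (p - 2 * c * s * (cmod x)\<^sup>2) (x * of_real (c + s * (2 * p - 1)))"
proof -
  have xx: "x * cnj x = of_real ((cmod x)\<^sup>2)"
    by (simp only: complex_norm_square)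
  have s2: "complex_of_real s * of_real s = 1 - of_real c * of_real c"
    using assms by (simp add: power2_eq_square algebra_simps flip: of_real_mult of_real_add)
  show ?thesis
    by (rule qmat_eqI)
      (simp_all add: ptrace_B_def mult2_def adj2_def tensor_def rotU_def UNIV_bool_prod UNIV_bool
        algebra_simps power2_eq_square xx s2)
qed

lemma concat_step_qmat:
  fixes p :: real and x :: complex
  defines "z \<equiv> 2 * p - 1"
  shows "concat_step (qmat p x)
    = qmat (p - 2 * z * (cmod x)\<^sup>2 / (1 + z\<^sup>2)) (x * of_real (sqrt (1 + z\<^sup>2)))"
proof -
  define q where "q = sqrt (1 + z\<^sup>2)"
  have A: "1 + z\<^sup>2 > 0"
    by (simp add: add_pos_nonneg)
  then have q: "q > 0" "q\<^sup>2 = 1 + z\<^sup>2"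
    unfolding q_def by simp_all
  have "U_step (qmat p x) = rotU (1 / q) (z / q)"
    by (simp add: U_step_def cos_theta_def sin_theta_def p00_def q_def z_def)
  moreover have "(1 / q)\<^sup>2 + (z / q)\<^sup>2 = 1"
    using q A by (simp add: power_divide add_divide_distrib[symmetric])
  ultimately have "concat_step (qmat p x)
      = qmat (p - 2 * (1 / q) * (z / q) * (cmod x)\<^sup>2) (x * of_real (1 / q + z / q * (2 * p - 1)))"
    unfolding concat_step_def by (simp only: ptrace_B_rotU_conj_qmat)
  also have "2 * (1 / q) * (z / q) * (cmod x)\<^sup>2 = 2 * z * (cmod x)\<^sup>2 / (1 + z\<^sup>2)"
    using q by (simp add: power2_eq_square)
  also have "1 / q + z / q * (2 * p - 1) = q"
    using q by (simp add: z_def field_simps power2_eq_square)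
  finally show ?thesis
    unfolding q_def .
qed

lemma bloch_update_nonincreasing:
  fixes z w :: real
  assumes "0 \<le> w" "z\<^sup>2 + w \<le> 1"
  shows "(z - z * w / (1 + z\<^sup>2))\<^sup>2 + w * (1 + z\<^sup>2) \<le> z\<^sup>2 + w"
proof -
  define A where "A = 1 + z\<^sup>2"
  have A: "A > 0"
    unfolding A_def by (simp add: add_pos_nonneg)
  txt \<open>After clearing the denominator A^2 the deficit is w z^2 (1 - z^4 - w).\<close>
  have "z\<^sup>2 \<le> 1"
    using assms by linarith
  then have "z\<^sup>2 * z\<^sup>2 \<le> z\<^sup>2"
    by (rule mult_left_le) simp
  with assms have "0 \<le> w * z\<^sup>2 * (1 - z\<^sup>2 * z\<^sup>2 - w)"
    by simp
  also have "w * z\<^sup>2 * (1 - z\<^sup>2 * z\<^sup>2 - w) = (z\<^sup>2 + w) * A\<^sup>2 - ((z * (A - w))\<^sup>2 + w * A ^ 3)"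
    unfolding A_def by (simp add: algebra_simps power2_eq_square power3_eq_cube)
  finally have "((z * (A - w))\<^sup>2 + w * A ^ 3) / A\<^sup>2 \<le> z\<^sup>2 + w"
    using A by (simp add: divide_le_eq)
  also have "((z * (A - w))\<^sup>2 + w * A ^ 3) / A\<^sup>2 = (z - z * w / A)\<^sup>2 + w * A"
    using A by (simp add: field_simps power2_eq_square power3_eq_cube)
  finally show ?thesis
    unfolding A_def .
qed

lemma bloch_norm2_concat_step_le:
  assumes "bloch_norm2 (qmat p x) \<le> 1"
  shows "bloch_norm2 (concat_step (qmat p x)) \<le> bloch_norm2 (qmat p x)"
proof -
  define z n where "z = 2 * p - 1" and "n = (cmod x)\<^sup>2"
  have "bloch_norm2 (concat_step (qmat p x))
      = (z - z * (4 * n) / (1 + z\<^sup>2))\<^sup>2 + 4 * n * (1 + z\<^sup>2)"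
    by (simp add: concat_step_qmat bloch_norm2_qmat norm_mult
        z_def n_def field_simps add_pos_nonneg)
  also have "\<dots> \<le> z\<^sup>2 + 4 * n"
    using assms by (intro bloch_update_nonincreasing) (simp_all add: bloch_norm2_qmat z_def n_def)
  also have "\<dots> = bloch_norm2 (qmat p x)"
    by (simp add: bloch_norm2_qmat z_def n_def)
  finally show ?thesis .
qed

lemma bloch_norm2_sigma_seq_le:
  assumes "qubit_state \<rho>"
  shows "bloch_norm2 (sigma_seq \<rho> m) \<le> bloch_norm2 \<rho>"
proof -
  have "hermitian1 \<rho>" "trace1 \<rho> = 1"
    using assms by (simp_all add: qubit_state_def psd1_def)
  then obtain p x where \<rho>: "\<rho> = qmat p x"
    by (rule hermitian1_unit_trace_qmatE)
  have "\<exists>p' x'. sigma_seq \<rho> m = qmat p' x' \<and> bloch_norm2 (sigma_seq \<rho> m) \<le> bloch_norm2 \<rho>"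
  proof (induction m)
    case 0
    show ?case using \<rho> by auto
  next
    case (Suc m)
    then obtain p' x' where \<sigma>: "sigma_seq \<rho> m = qmat p' x'"
      and le: "bloch_norm2 (qmat p' x') \<le> bloch_norm2 \<rho>"
      by auto
    then have "bloch_norm2 (qmat p' x') \<le> 1"
      using qubit_state_bloch_norm2_le_1[OF assms] by linarith
    then have "bloch_norm2 (sigma_seq \<rho> (Suc m)) \<le> bloch_norm2 \<rho>"
      using \<sigma> le bloch_norm2_concat_step_le by fastforce
    moreover have "\<exists>p'' x''. sigma_seq \<rho> (Suc m) = qmat p'' x''"
      unfolding sigma_seq.simps \<sigma> concat_step_qmat by blast
    ultimately show ?case by blast
  qed
  then show ?thesis by blast
qed

theorem mainTheorem3:
  fixes \<rho> :: qop and m :: nat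
  assumes "qubit_state \<rho>"
  shows "M1 (sigma_seq \<rho> m) \<le> sqrt (2 * purity \<rho> - 1)"
proof -
  have "M1 (sigma_seq \<rho> m) \<le> sqrt (bloch_norm2 (sigma_seq \<rho> m))"
    by (rule M1_le_sqrt_bloch_norm2)
  also have "\<dots> \<le> sqrt (bloch_norm2 \<rho>)"
    using bloch_norm2_sigma_seq_le[OF assms] by simp
  also have "bloch_norm2 \<rho> = 2 * purity \<rho> - 1"
    using assms by (intro bloch_norm2_eq_purity) (simp_all add: qubit_state_def psd1_def)
  finally show ?thesis .
qed

end
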